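(* For all positive integers $k$ and $i$ with $1\le i\le k$, the sets $\Pi_{i,k}$ and $\Pi_{i,k}^c$ are minimal unavoidable sets.
   Context: For $\sigma\in S_n$, the cyclic permutation $[\sigma]$ is the set of all rotations of $\sigma$. For $\pi\in S_k$, the totally vincular pattern $\overline{\pi}$ is $\pi$ with all adjacent positions overlined; a cyclic permutation $[\sigma]$ of length $n\ge k$ contains $\overline{\pi}$ if some $k$ cyclically consecutive entries $\sigma_j\sigma_{j+1}\cdots\sigma_{j+k-1}$ (indices mod $n$) are order-isomorphic to $\pi$. $\overline{S_k}$ is the set of totally vincular patterns of length $k$. For $\Pi\subseteq\overline{S_k}$, $\mathrm{Av}_n[\Pi]$ is the set of cyclic permutations of length $n$ containing no pattern of $\Pi$. $\Pi$ is unavoidable if $|\mathrm{Av}_n[\Pi]|=0$ for all sufficiently large $n$, and avoidable otherwise; $\Pi$ is a minimal unavoidable set if it is unavoidable but every proper subset is avoidable. $\Pi_{i,k}$ is the set of all $\overline{\pi}\in\overline{S_k}$ with $\pi_i=1$, and $\Pi_{i,k}^c$ is the set of all $\overline{\pi}\in\overline{S_k}$ with $\pi_i=k$. *)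

theory Defs
  imports Main
begin

definition perms :: "nat \<Rightarrow> nat list set" where
  "perms n = {\<sigma>. distinct \<sigma> \<and> set \<sigma> = {1..n}}"

text \<open>Cyclic permutation: the set of all rotations of \<sigma>.\<close>
definition cyc :: "nat list \<Rightarrow> nat list set" where
  "cyc \<sigma> = {rotate r \<sigma> | r. r < length \<sigma>}"

definition order_iso :: "nat list \<Rightarrow> nat list \<Rightarrow> bool" where
  "order_iso xs ys \<longleftrightarrow> length xs = length ys \<and>
     (\<forall>a < length xs. \<forall>b < length xs. (xs ! a < xs ! b \<longleftrightarrow> ys ! a < ys ! b))"

definition cwindow :: "nat list \<Rightarrow> nat \<Rightarrow> nat \<Rightarrow> nat list" where
  "cwindow \<sigma> j k = map (\<lambda>t. \<sigma> ! ((j + t) mod length \<sigma>)) [0..<k]"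

text \<open>The cyclic permutation [\<sigma>] contains the totally vincular pattern \<pi>-bar.\<close>
definition cyc_contains :: "nat list \<Rightarrow> nat list \<Rightarrow> bool" where
  "cyc_contains \<sigma> \<pi> \<longleftrightarrow> length \<sigma> \<ge> length \<pi> \<and>
     (\<exists>j < length \<sigma>. order_iso (cwindow \<sigma> j (length \<pi>)) \<pi>)"

text \<open>Av_n[\<Pi>] as a set of cyclic permutations (rotation classes).\<close>
definition Av :: "nat \<Rightarrow> nat list set \<Rightarrow> nat list set set" where
  "Av n \<Pi> = {cyc \<sigma> | \<sigma>. \<sigma> \<in> perms n \<and> \<not> (\<exists>\<pi>\<in>\<Pi>. cyc_contains \<sigma> \<pi>)}"

definition unavoidable :: "nat list set \<Rightarrow> bool" where
  "unavoidable \<Pi> \<longleftrightarrow> (\<exists>N. \<forall>n \<ge> N. card (Av n \<Pi>) = 0)"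

definition avoidable :: "nat list set \<Rightarrow> bool" where
  "avoidable \<Pi> \<longleftrightarrow> \<not> unavoidable \<Pi>"

definition minimal_unavoidable :: "nat list set \<Rightarrow> bool" where
  "minimal_unavoidable \<Pi> \<longleftrightarrow> unavoidable \<Pi> \<and> (\<forall>\<Pi>'. \<Pi>' \<subset> \<Pi> \<longrightarrow> avoidable \<Pi>')"

text \<open>\<Pi>_{i,k}: patterns of length k with \<pi>_i = 1 (1-based i);
  \<Pi>^c_{i,k}: patterns with \<pi>_i = k.\<close>
definition Pi_low :: "nat \<Rightarrow> nat \<Rightarrow> nat list set" where
  "Pi_low i k = {\<pi> \<in> perms k. \<pi> ! (i - 1) = 1}"

definition Pi_high :: "nat \<Rightarrow> nat \<Rightarrow> nat list set" where
  "Pi_high i k = {\<pi> \<in> perms k. \<pi> ! (i - 1) = k}"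

end

theory Submission
  imports Defs
begin

text \<open>A cyclic permutation of length \<open>n \<ge> k\<close> has a window of \<open>k\<close> cyclically consecutive
  entries whose \<open>i\<close>-th entry is its global minimum \<open>1\<close> (maximum \<open>n\<close>); the pattern of
  that window lies in \<open>Pi_low i k\<close> (\<open>Pi_high i k\<close>), so these sets are unavoidable.
  For minimality, given \<open>\<pi>\<close> in the set, concatenate \<open>m\<close> copies of \<open>\<pi>\<close> whose values are
  interleaved so that entries coming from smaller values of \<open>\<pi>\<close> stay smaller in every copy.
  Then every window of \<open>k\<close> cyclically consecutive entries is order-isomorphic to a rotation
  of \<open>\<pi>\<close>, and the only rotation of \<open>\<pi>\<close> with the prescribed entry at position \<open>i\<close> is \<open>\<pi>\<close>
  itself. So for arbitrarily large \<open>m\<close> this cyclic permutation avoids every proper subset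
  missing \<open>\<pi>\<close>.\<close>

lemma length_perms: "\<pi> \<in> perms k \<Longrightarrow> length \<pi> = k"
  unfolding perms_def using distinct_card by fastforce

lemma perms_nth_bounds: "\<pi> \<in> perms k \<Longrightarrow> a < k \<Longrightarrow> 1 \<le> \<pi> ! a \<and> \<pi> ! a \<le> k"
  using length_perms nth_mem unfolding perms_def by fastforce

lemma finite_perms: "finite (perms n)"
proof (rule finite_subset)
  show "perms n \<subseteq> {xs. set xs \<subseteq> {1..n} \<and> length xs = n}"
    using length_perms unfolding perms_def by auto
qed (simp add: finite_lists_length_eq)

lemma card_nth_filter_eq_card_values:
  assumes "distinct xs"
  shows "card {b. b < length xs \<and> P (xs ! b)} = card {x \<in> set xs. P x}"
proof -
  have "{x \<in> set xs. P x} = (!) xs ` {b. b < length xs \<and> P (xs ! b)}"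
    by (auto simp: in_set_conv_nth)
  moreover have "inj_on ((!) xs) {b. b < length xs \<and> P (xs ! b)}"
    using assms by (simp add: inj_on_def nth_eq_iff_index_eq)
  ultimately show ?thesis by (simp add: card_image)
qed

lemma strict_mono_on_card_atMost:
  fixes A :: "'a::linorder set"
  assumes "finite A"
  shows "strict_mono_on A (\<lambda>x. card {y \<in> A. y \<le> x})"
proof (rule strict_mono_onI)
  fix x x' assume "x \<in> A" "x' \<in> A" "x < x'"
  then have "{y \<in> A. y \<le> x} \<subset> {y \<in> A. y \<le> x'}"
    by (auto intro!: psubsetI dest: leD)
  then show "card {y \<in> A. y \<le> x} < card {y \<in> A. y \<le> x'}"
    using assms by (intro psubset_card_mono) auto
qed

definition standardize :: "nat list \<Rightarrow> nat list" where
  "standardize w = map (\<lambda>a. card {b. b < length w \<and> w ! b \<le> w ! a}) [0..<length w]"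

lemma standardize_eq_map:
  assumes "distinct w"
  shows "standardize w = map (\<lambda>x. card {y \<in> set w. y \<le> x}) w"
  unfolding standardize_def using card_nth_filter_eq_card_values[OF assms]
  by (intro nth_equalityI) auto

lemma standardize_cong:
  assumes "order_iso w v"
  shows "standardize w = standardize v"
proof -
  have "{b. b < length w \<and> w ! b \<le> w ! a} = {b. b < length v \<and> v ! b \<le> v ! a}"
    if "a < length w" for a
    using assms that unfolding order_iso_def by (auto simp: not_less[symmetric])
  then show ?thesis
    using assms unfolding standardize_def order_iso_def by simp
qed

lemma order_iso_standardize: "distinct w \<Longrightarrow> order_iso w (standardize w)"
  unfolding order_iso_def standardize_eq_map
  by (simp add: strict_mono_on_less[OF strict_mono_on_card_atMost])

lemma standardize_in_perms:
  assumes "distinct w"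
  shows "standardize w \<in> perms (length w)"
proof -
  let ?rank = "\<lambda>x. card {y \<in> set w. y \<le> x}"
  have inj: "inj_on ?rank (set w)"
    by (simp add: strict_mono_on_imp_inj_on strict_mono_on_card_atMost)
  have "?rank x \<in> {1..length w}" if "x \<in> set w" for x
  proof -
    have "x \<in> {y \<in> set w. y \<le> x}" using that by simp
    then have "?rank x \<ge> 1" by (simp add: Suc_le_eq card_gt_0_iff) blast
    moreover have "?rank x \<le> card (set w)" by (intro card_mono) auto
    ultimately show ?thesis using distinct_card[OF assms] by simp
  qed
  then have "?rank ` set w \<subseteq> {1..length w}" by blast
  moreover have "card (?rank ` set w) = length w"
    using card_image[OF inj] distinct_card[OF assms] by simp
  ultimately have "?rank ` set w = {1..length w}"
    by (intro card_subset_eq) auto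
  then show ?thesis
    using inj assms by (simp add: perms_def standardize_eq_map distinct_map)
qed

lemma standardize_perm:
  assumes "\<pi> \<in> perms k"
  shows "standardize \<pi> = \<pi>"
proof -
  have "{y \<in> {1..k}. y \<le> x} = {1..x}" if "x \<in> {1..k}" for x
    using that by auto
  then show ?thesis
    using assms unfolding perms_def by (auto simp: standardize_eq_map intro: map_idI)
qed

lemma standardize_nth_Min:
  assumes "distinct w" "c < length w" "\<forall>x \<in> set w. w ! c \<le> x"
  shows "standardize w ! c = 1"
proof -
  have "{y \<in> set w. y \<le> w ! c} = {w ! c}" using assms by force
  then show ?thesis using assms by (simp add: standardize_eq_map)
qed

lemma standardize_nth_Max:
  assumes "distinct w" "c < length w" "\<forall>x \<in> set w. x \<le> w ! c"
  shows "standardize w ! c = length w"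
proof -
  have "{y \<in> set w. y \<le> w ! c} = set w" using assms by force
  then show ?thesis using assms by (simp add: standardize_eq_map distinct_card)
qed

lemma length_cwindow [simp]: "length (cwindow \<sigma> j k) = k"
  by (simp add: cwindow_def)

lemma nth_cwindow: "b < k \<Longrightarrow> cwindow \<sigma> j k ! b = \<sigma> ! ((j + b) mod length \<sigma>)"
  by (simp add: cwindow_def)

lemma cwindow_eq_take_rotate: "k \<le> length \<sigma> \<Longrightarrow> cwindow \<sigma> j k = take k (rotate j \<sigma>)"
  by (intro nth_equalityI) (auto simp: nth_cwindow nth_rotate)

lemma distinct_cwindow: "distinct \<sigma> \<Longrightarrow> k \<le> length \<sigma> \<Longrightarrow> distinct (cwindow \<sigma> j k)"
  by (simp add: cwindow_eq_take_rotate)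

lemma set_cwindow_subset: "k \<le> length \<sigma> \<Longrightarrow> set (cwindow \<sigma> j k) \<subseteq> set \<sigma>"
  using set_take_subset by (fastforce simp: cwindow_eq_take_rotate)

lemma exists_cwindow_nth_eq:
  assumes "x \<in> set \<sigma>" "c < k" "c < length \<sigma>"
  shows "\<exists>j < length \<sigma>. cwindow \<sigma> j k ! c = x"
proof -
  let ?n = "length \<sigma>"
  obtain p where p: "p < ?n" "\<sigma> ! p = x" using assms(1) by (auto simp: in_set_conv_nth)
  have "((p + ?n - c) mod ?n + c) mod ?n = p"
    using p(1) assms(3) by (simp add: mod_add_left_eq)
  then have "cwindow \<sigma> ((p + ?n - c) mod ?n) k ! c = x"
    using p assms(2) by (simp add: nth_cwindow)
  moreover have "(p + ?n - c) mod ?n < ?n" using p(1) by (intro mod_less_divisor) auto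
  ultimately show ?thesis by blast
qed

lemma cyc_contains_standardize_cwindow:
  assumes "distinct \<sigma>" "k \<le> length \<sigma>" "j < length \<sigma>"
  shows "cyc_contains \<sigma> (standardize (cwindow \<sigma> j k))"
  using assms order_iso_standardize[OF distinct_cwindow] length_perms standardize_in_perms
    distinct_cwindow unfolding cyc_contains_def by (metis length_cwindow)

lemma unavoidable_iff:
  "unavoidable P \<longleftrightarrow> (\<exists>N. \<forall>n \<ge> N. \<forall>\<sigma> \<in> perms n. \<exists>\<pi> \<in> P. cyc_contains \<sigma> \<pi>)"
proof -
  have "finite (Av n P)" for n
    unfolding Av_def using finite_perms by (auto intro: finite_subset[of _ "cyc ` perms n"])
  then have "card (Av n P) = 0 \<longleftrightarrow> (\<forall>\<sigma> \<in> perms n. \<exists>\<pi> \<in> P. cyc_contains \<sigma> \<pi>)" for n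
    unfolding Av_def by auto
  then show ?thesis unfolding unavoidable_def by simp
qed

lemma obtain_cwindow_with_entry:
  assumes "\<sigma> \<in> perms n" "c < k" "k \<le> n" "x \<in> {1..n}"
  obtains w where "cyc_contains \<sigma> (standardize w)" "standardize w \<in> perms k"
    "length w = k" "distinct w" "set w \<subseteq> {1..n}" "w ! c = x"
proof -
  have \<sigma>: "distinct \<sigma>" "set \<sigma> = {1..n}" "length \<sigma> = n"
    using assms(1) length_perms unfolding perms_def by auto
  obtain j where "j < n" "cwindow \<sigma> j k ! c = x"
    using exists_cwindow_nth_eq[of x \<sigma> c k] assms \<sigma> by auto
  with that show ?thesis
    using \<sigma> assms standardize_in_perms distinct_cwindow set_cwindow_subset
      cyc_contains_standardize_cwindow by (metis length_cwindow)
qed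

lemma unavoidable_Pi_low:
  assumes "1 \<le> i" "i \<le> k"
  shows "unavoidable (Pi_low i k)"
  unfolding unavoidable_iff
proof (intro exI allI impI ballI)
  fix n \<sigma> assume "k \<le> n" "\<sigma> \<in> perms n"
  moreover have "i - 1 < k" "1 \<in> {1..n}" using assms \<open>k \<le> n\<close> by auto
  ultimately obtain w where w: "cyc_contains \<sigma> (standardize w)" "standardize w \<in> perms k"
    "length w = k" "distinct w" "set w \<subseteq> {1..n}" "w ! (i - 1) = 1"
    by (metis obtain_cwindow_with_entry)
  then have "standardize w ! (i - 1) = 1"
    using \<open>i - 1 < k\<close> by (intro standardize_nth_Min) auto
  then show "\<exists>\<pi> \<in> Pi_low i k. cyc_contains \<sigma> \<pi>"
    using w unfolding Pi_low_def by blast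
qed

lemma unavoidable_Pi_high:
  assumes "1 \<le> i" "i \<le> k"
  shows "unavoidable (Pi_high i k)"
  unfolding unavoidable_iff
proof (intro exI allI impI ballI)
  fix n \<sigma> assume "k \<le> n" "\<sigma> \<in> perms n"
  moreover have "i - 1 < k" "n \<in> {1..n}" using assms \<open>k \<le> n\<close> by auto
  ultimately obtain w where w: "cyc_contains \<sigma> (standardize w)" "standardize w \<in> perms k"
    "length w = k" "distinct w" "set w \<subseteq> {1..n}" "w ! (i - 1) = n"
    by (metis obtain_cwindow_with_entry)
  moreover have "\<forall>x \<in> set w. x \<le> w ! (i - 1)" using w by auto
  ultimately have "standardize w ! (i - 1) = k"
    using \<open>i - 1 < k\<close> standardize_nth_Max[of w "i - 1"] by simp
  then show "\<exists>\<pi> \<in> Pi_high i k. cyc_contains \<sigma> \<pi>"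
    using w unfolding Pi_high_def by blast
qed

text \<open>The concatenation of \<open>m\<close> copies of \<open>\<pi>\<close>, where the entry \<open>v\<close> of the \<open>t\<close>-th copy
  (\<open>t < m\<close>) becomes \<open>m (v - 1) + t + 1\<close>: each copy is order-isomorphic to \<open>\<pi>\<close>, and the
  entries coming from the value \<open>v\<close> of \<open>\<pi>\<close> form the block \<open>m (v - 1) + 1 .. m v\<close>.\<close>
definition copies :: "nat list \<Rightarrow> nat \<Rightarrow> nat list" where
  "copies \<pi> m =
     map (\<lambda>p. m * (\<pi> ! (p mod length \<pi>) - 1) + p div length \<pi> + 1) [0..<m * length \<pi>]"

lemma length_copies [simp]: "length (copies \<pi> m) = m * length \<pi>"
  by (simp add: copies_def)

lemma nth_copies:
  "p < m * length \<pi> \<Longrightarrow> copies \<pi> m ! p = m * (\<pi> ! (p mod length \<pi>) - 1) + p div length \<pi> + 1"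
  by (simp add: copies_def)

lemma copies_in_perms:
  assumes "\<pi> \<in> perms k"
  shows "copies \<pi> m \<in> perms (m * k)"
proof -
  define f where "f p = m * (\<pi> ! (p mod k) - 1) + p div k + 1" for p
  have copies: "copies \<pi> m = map f [0..<m * k]"
    unfolding copies_def f_def using length_perms[OF assms] by simp
  have block: "p div k < m" "p mod k < k" if "p < m * k" for p
    using that by (auto simp: less_mult_imp_div_less mult.commute intro!: mod_less_divisor Nat.gr0I)
  have inj: "inj_on f {0..<m * k}"
  proof (rule inj_onI)
    fix p q assume pq: "p \<in> {0..<m * k}" "q \<in> {0..<m * k}" "f p = f q"
    then have e: "m * (\<pi> ! (p mod k) - 1) + p div k = m * (\<pi> ! (q mod k) - 1) + q div k"
      by (simp add: f_def)
    have div_eq: "p div k = q div k"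
      using arg_cong[OF e, of "\<lambda>x. x mod m"] block pq(1,2) by simp
    have "0 < m" using pq(1) by (cases m) auto
    with e div_eq have "\<pi> ! (p mod k) - 1 = \<pi> ! (q mod k) - 1" by simp
    moreover have "1 \<le> \<pi> ! (p mod k)" "1 \<le> \<pi> ! (q mod k)"
      using perms_nth_bounds[OF assms] block pq(1,2) by auto
    ultimately have "\<pi> ! (p mod k) = \<pi> ! (q mod k)" by linarith
    then have mod_eq: "p mod k = q mod k"
      using assms block pq(1,2) length_perms[OF assms] by (simp add: perms_def nth_eq_iff_index_eq)
    show "p = q" using div_eq mod_eq by (metis div_mult_mod_eq)
  qed
  have range: "f p \<in> {1..m * k}" if "p < m * k" for p
  proof -
    have "\<pi> ! (p mod k) \<in> {1..k}" "p div k < m"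
      using that block perms_nth_bounds[OF assms] by auto
    then have "f p \<le> m * (\<pi> ! (p mod k) - 1) + m" by (simp add: f_def)
    also have "\<dots> = m * \<pi> ! (p mod k)"
      using \<open>\<pi> ! (p mod k) \<in> {1..k}\<close> by (cases "\<pi> ! (p mod k)") auto
    also have "\<dots> \<le> m * k" using \<open>\<pi> ! (p mod k) \<in> {1..k}\<close> by simp
    finally show ?thesis by (simp add: f_def)
  qed
  have "f ` {0..<m * k} = {1..m * k}"
    using inj range by (intro card_subset_eq) (auto simp: card_image)
  with inj show ?thesis
    unfolding perms_def copies by (simp add: distinct_map)
qed

lemma copies_nth_less:
  assumes "\<pi> \<in> perms k" "p < m * k" "q < m * k" "\<pi> ! (p mod k) < \<pi> ! (q mod k)"
  shows "copies \<pi> m ! p < copies \<pi> m ! q"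
proof -
  have "k > 0" using assms(2) by (cases k) auto
  then have "p div k < m" "1 \<le> \<pi> ! (p mod k)"
    using assms(1,2) perms_nth_bounds by (auto simp: less_mult_imp_div_less mult.commute)
  then have "copies \<pi> m ! p \<le> m * (\<pi> ! (p mod k) - 1) + m"
    using assms(1,2) length_perms by (simp add: nth_copies)
  also have "\<dots> = m * \<pi> ! (p mod k)"
    using \<open>1 \<le> \<pi> ! (p mod k)\<close> by (cases "\<pi> ! (p mod k)") auto
  also have "\<dots> \<le> m * (\<pi> ! (q mod k) - 1)"
    using assms(4) by (intro mult_le_mono2) linarith
  also have "\<dots> < copies \<pi> m ! q"
    using assms(1,3) length_perms by (simp add: nth_copies)
  finally show ?thesis .
qed

lemma order_isoI:
  assumes "length xs = length ys" "distinct ys"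
    and "\<And>a b. a < length ys \<Longrightarrow> b < length ys \<Longrightarrow> ys ! a < ys ! b \<Longrightarrow> xs ! a < xs ! b"
  shows "order_iso xs ys"
  unfolding order_iso_def
proof (intro conjI allI impI)
  fix a b assume ab: "a < length xs" "b < length xs"
  show "xs ! a < xs ! b \<longleftrightarrow> ys ! a < ys ! b"
  proof
    assume "xs ! a < xs ! b"
    then have "\<not> ys ! b < ys ! a" "a \<noteq> b" using assms(1,3) ab by force+
    then show "ys ! a < ys ! b"
      using assms(1,2) ab nth_eq_iff_index_eq by (metis linorder_neqE_nat)
  qed (use assms ab in auto)
qed (use assms in simp)

lemma order_iso_cwindow_copies:
  assumes "\<pi> \<in> perms k" "0 < m"
  shows "order_iso (cwindow (copies \<pi> m) j k) (rotate j \<pi>)"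
proof (rule order_isoI)
  have len: "length \<pi> = k" using length_perms[OF assms(1)] .
  show "length (cwindow (copies \<pi> m) j k) = length (rotate j \<pi>)" using len by simp
  show "distinct (rotate j \<pi>)" using assms(1) by (simp add: perms_def)
  fix a b assume ab: "a < length (rotate j \<pi>)" "b < length (rotate j \<pi>)"
    and "rotate j \<pi> ! a < rotate j \<pi> ! b"
  then have "\<pi> ! ((j + a) mod (m * k) mod k) < \<pi> ! ((j + b) mod (m * k) mod k)"
    using len by (simp add: nth_rotate mod_mod_cancel)
  moreover have "(j + a) mod (m * k) < m * k" "(j + b) mod (m * k) < m * k"
    using ab assms(2) len by auto
  ultimately show "cwindow (copies \<pi> m) j k ! a < cwindow (copies \<pi> m) j k ! b"
    using ab len copies_nth_less[OF assms(1)] by (simp add: nth_cwindow)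
qed

lemma cyc_contains_copies_imp_rotate:
  assumes "\<pi> \<in> perms k" "\<pi>' \<in> perms k" "0 < m" "cyc_contains (copies \<pi> m) \<pi>'"
  shows "\<exists>j. \<pi>' = rotate j \<pi>"
proof -
  obtain j where "order_iso (cwindow (copies \<pi> m) j k) \<pi>'"
    using assms(2,4) length_perms unfolding cyc_contains_def by metis
  moreover have "rotate j \<pi> \<in> perms k" using assms(1) by (simp add: perms_def)
  ultimately have "\<pi>' = rotate j \<pi>"
    using order_iso_cwindow_copies[OF assms(1,3)] standardize_cong standardize_perm assms(2)
    by metis
  then show ?thesis ..
qed

lemma rotate_eq_self_if_nth_eq:
  assumes "distinct xs" "c < length xs" "rotate j xs ! c = xs ! c"
  shows "rotate j xs = xs"
proof -
  have "(j + c) mod length xs < length xs" using assms(2) by (intro mod_less_divisor) auto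
  then have "(j + c) mod length xs = c"
    using assms nth_eq_iff_index_eq[OF assms(1)] by (simp add: nth_rotate)
  then have "j mod length xs = 0"
    by (metis add_right_cancel div_mod_decomp mod_mult_self2_is_0)
  then show ?thesis by (metis rotate_conv_mod rotate0 id_apply)
qed

lemma minimal_unavoidable_if_common_entry:
  assumes "unavoidable P" "P \<subseteq> perms k" "c < k"
    and "\<And>\<pi> \<pi>'. \<pi> \<in> P \<Longrightarrow> \<pi>' \<in> P \<Longrightarrow> \<pi>' ! c = \<pi> ! c"
  shows "minimal_unavoidable P"
  unfolding minimal_unavoidable_def avoidable_def
proof (intro conjI allI impI notI)
  fix P' assume "P' \<subset> P" "unavoidable P'"
  then obtain \<pi> where \<pi>: "\<pi> \<in> P" "\<pi> \<notin> P'" by blast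
  obtain N where "\<forall>n \<ge> N. \<forall>\<sigma> \<in> perms n. \<exists>\<pi>' \<in> P'. cyc_contains \<sigma> \<pi>'"
    using \<open>unavoidable P'\<close> unfolding unavoidable_iff by blast
  moreover have "N \<le> Suc N * k" using assms(3) by (cases k) auto
  moreover have "copies \<pi> (Suc N) \<in> perms (Suc N * k)"
    using \<pi>(1) assms(2) copies_in_perms by blast
  ultimately obtain \<pi>' where \<pi>': "\<pi>' \<in> P'" "cyc_contains (copies \<pi> (Suc N)) \<pi>'" by blast
  then obtain j where "\<pi>' = rotate j \<pi>"
    using cyc_contains_copies_imp_rotate \<pi>(1) \<open>P' \<subset> P\<close> assms(2) by blast
  moreover have "distinct \<pi>" "c < length \<pi>"
    using \<pi>(1) assms(2,3) length_perms by (auto simp: perms_def)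
  ultimately have "\<pi>' = \<pi>"
    using rotate_eq_self_if_nth_eq assms(4) \<pi>(1) \<pi>'(1) \<open>P' \<subset> P\<close> by blast
  with \<pi> \<pi>'(1) show False by simp
qed (rule assms(1))

theorem theorem6p1:
  fixes i k :: nat
  assumes "1 \<le> i" and "i \<le> k"
  shows "minimal_unavoidable (Pi_low i k) \<and> minimal_unavoidable (Pi_high i k)"
proof
  have "i - 1 < k" using assms by simp
  show "minimal_unavoidable (Pi_low i k)"
    by (rule minimal_unavoidable_if_common_entry[OF unavoidable_Pi_low[OF assms] _ \<open>i - 1 < k\<close>])
      (auto simp: Pi_low_def)
  show "minimal_unavoidable (Pi_high i k)"
    by (rule minimal_unavoidable_if_common_entry[OF unavoidable_Pi_high[OF assms] _ \<open>i - 1 < k\<close>])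
      (auto simp: Pi_high_def)
qed

end
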